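(* Let $\mathcal{D}:=\{Z\in L^1:Z\ge0 \text{ a.s.},\mathbb{E}[Z]=1\}$ and let $\mathcal{Q}\subset\mathcal{D}$ be convex with $1\in\mathcal{Q}$. Define $\tilde{\mathcal{Q}}_{\max}$ as the set of all $\tilde Z\in\mathcal{Q}$ with $\tilde Z>0$ a.s. for which there exists an $L^\infty$-dense subset $\mathcal{E}$ of $\mathcal{D}\cap L^\infty$ such that for every $Z\in\mathcal{E}$ there is $\lambda\in(0,1)$ with $\lambda Z+(1-\lambda)\tilde Z\in\mathcal{Q}$. Then $\tilde{\mathcal{Q}}_{\max}$ satisfies Conditions POS, MIX and INT. Moreover, if $\tilde{\mathcal{Q}}\subset\mathcal{Q}$ satisfies Conditions POS, MIX and INT, then $\tilde{\mathcal{Q}}\subset\tilde{\mathcal{Q}}_{\max}$.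
   Context: All random variables are on a probability space $(\Omega,\mathcal{F},\mathbb{P})$. For $\tilde{\mathcal{Q}}\subset\mathcal{Q}$: Condition POS: $\tilde Z>0$ a.s. for all $\tilde Z\in\tilde{\mathcal{Q}}$. Condition MIX: $\lambda Z+(1-\lambda)\tilde Z\in\tilde{\mathcal{Q}}$ for all $Z\in\mathcal{Q}$, $\tilde Z\in\tilde{\mathcal{Q}}$ and $\lambda\in(0,1)$. Condition INT: for every $\tilde Z\in\tilde{\mathcal{Q}}$ there is an $L^\infty$-dense subset $\mathcal{E}$ of $\mathcal{D}\cap L^\infty$ such that for every $Z\in\mathcal{E}$ there is $\lambda\in(0,1)$ with $\lambda Z+(1-\lambda)\tilde Z\in\mathcal{Q}$. *)

theory Defs
  imports "HOL-Probability.Probability"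
begin

text \<open>Random variables are represented by real-valued functions on the sample space;
  all conditions are taken almost surely where the paper does so.\<close>

definition densD :: "'a measure \<Rightarrow> ('a \<Rightarrow> real) set" where
  "densD M = {Z. integrable M Z \<and> (AE x in M. Z x \<ge> 0) \<and> integral\<^sup>L M Z = 1}"

definition Linf :: "'a measure \<Rightarrow> ('a \<Rightarrow> real) set" where
  "Linf M = {Z. Z \<in> borel_measurable M \<and> (\<exists>C. AE x in M. \<bar>Z x\<bar> \<le> C)}"

definition Linf_dense :: "'a measure \<Rightarrow> ('a \<Rightarrow> real) set \<Rightarrow> ('a \<Rightarrow> real) set \<Rightarrow> bool" where
  "Linf_dense M E A \<longleftrightarrow> (\<forall>Z\<in>A. \<forall>\<epsilon>>0. \<exists>Z'\<in>E. AE x in M. \<bar>Z x - Z' x\<bar> \<le> \<epsilon>)"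

definition mixf :: "real \<Rightarrow> ('a \<Rightarrow> real) \<Rightarrow> ('a \<Rightarrow> real) \<Rightarrow> ('a \<Rightarrow> real)" where
  "mixf l Z Z' = (\<lambda>x. l * Z x + (1 - l) * Z' x)"

definition convex_fset :: "('a \<Rightarrow> real) set \<Rightarrow> bool" where
  "convex_fset Q \<longleftrightarrow> (\<forall>Z\<in>Q. \<forall>Z'\<in>Q. \<forall>l. 0 \<le> l \<and> l \<le> 1 \<longrightarrow> mixf l Z Z' \<in> Q)"

definition condPOS :: "'a measure \<Rightarrow> ('a \<Rightarrow> real) set \<Rightarrow> bool" where
  "condPOS M QT \<longleftrightarrow> (\<forall>Zt\<in>QT. AE x in M. Zt x > 0)"

definition condMIX :: "('a \<Rightarrow> real) set \<Rightarrow> ('a \<Rightarrow> real) set \<Rightarrow> bool" where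
  "condMIX Q QT \<longleftrightarrow> (\<forall>Z\<in>Q. \<forall>Zt\<in>QT. \<forall>l. 0 < l \<and> l < 1 \<longrightarrow> mixf l Z Zt \<in> QT)"

definition condINT :: "'a measure \<Rightarrow> ('a \<Rightarrow> real) set \<Rightarrow> ('a \<Rightarrow> real) set \<Rightarrow> bool" where
  "condINT M Q QT \<longleftrightarrow> (\<forall>Zt\<in>QT. \<exists>E. E \<subseteq> densD M \<inter> Linf M \<and> Linf_dense M E (densD M \<inter> Linf M) \<and>
      (\<forall>Z\<in>E. \<exists>l. 0 < l \<and> l < 1 \<and> mixf l Z Zt \<in> Q))"

definition Qmax :: "'a measure \<Rightarrow> ('a \<Rightarrow> real) set \<Rightarrow> ('a \<Rightarrow> real) set" where
  "Qmax M Q = {Zt \<in> Q. (AE x in M. Zt x > 0) \<and>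
      (\<exists>E. E \<subseteq> densD M \<inter> Linf M \<and> Linf_dense M E (densD M \<inter> Linf M) \<and>
         (\<forall>Z\<in>E. \<exists>l. 0 < l \<and> l < 1 \<and> mixf l Z Zt \<in> Q))}"

end

theory Submission
  imports Defs
begin

text \<open>\<open>Qmax M Q\<close> collects exactly the elements of \<open>Q\<close> that satisfy POS and INT individually, so
  it satisfies these two conditions and contains every family that does. The only content is MIX:
  if \<open>W\<close> can be mixed into \<open>Q\<close> with \<open>Zt\<close> at weight \<open>m\<close>, it can be mixed into \<open>Q\<close> with
  \<open>l Z + (1 - l) Zt\<close> at weight \<open>a m\<close>, \<open>a = (1 - l) / (1 - m l)\<close>, since that mixture is the
  convex combination \<open>a (m W + (1 - m) Zt) + (1 - a) Z\<close> of two elements of \<open>Q\<close>.\<close>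

lemma mixf_mixf_reassoc:
  assumes "a * (1 - m * l) = 1 - l"
  shows "mixf a (mixf m W Zt) Z = mixf (a * m) W (mixf l Z Zt)"
proof -
  have Z_coeff: "1 - a = (1 - a * m) * l" and Zt_coeff: "a * (1 - m) = (1 - a * m) * (1 - l)"
    using assms by (simp_all add: algebra_simps)
  show ?thesis
  proof
    fix x
    have "mixf a (mixf m W Zt) Z x = a * m * W x + (a * (1 - m)) * Zt x + (1 - a) * Z x"
      by (simp add: mixf_def algebra_simps)
    also have "\<dots> = a * m * W x + ((1 - a * m) * (1 - l)) * Zt x + ((1 - a * m) * l) * Z x"
      by (simp only: Z_coeff Zt_coeff)
    also have "\<dots> = mixf (a * m) W (mixf l Z Zt) x"
      by (simp add: mixf_def algebra_simps)
    finally show "mixf a (mixf m W Zt) Z x = mixf (a * m) W (mixf l Z Zt) x" .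
  qed
qed

lemma mixf_in_convex_fset:
  assumes "convex_fset Q" "Z \<in> Q" "Z' \<in> Q" "0 \<le> l" "l \<le> 1"
  shows "mixf l Z Z' \<in> Q"
  using assms unfolding convex_fset_def by blast

lemma mixf_into_convex_fset_through_mixf:
  assumes "convex_fset Q" "Z \<in> Q" "mixf m W Zt \<in> Q"
    and "0 < l" "l < 1" "0 < m" "m < 1"
  shows "\<exists>n. 0 < n \<and> n < 1 \<and> mixf n W (mixf l Z Zt) \<in> Q"
proof -
  define a where "a = (1 - l) / (1 - m * l)"
  have "m * l < l"
    using assms by (simp add: mult_less_cancel_right2)
  then have denom_pos: "0 < 1 - m * l"
    using \<open>l < 1\<close> by linarith
  have a_pos: "0 < a" and a_less_1: "a < 1"
    unfolding a_def using denom_pos \<open>l < 1\<close> \<open>m * l < l\<close> by (simp_all add: divide_less_eq_1_pos)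
  have "a * m < 1"
    using a_pos a_less_1 \<open>m < 1\<close> mult_strict_left_mono[of m 1 a] by linarith
  moreover have "0 < a * m"
    using a_pos \<open>0 < m\<close> by simp
  moreover have "mixf (a * m) W (mixf l Z Zt) = mixf a (mixf m W Zt) Z"
    using denom_pos by (intro mixf_mixf_reassoc[symmetric]) (simp add: a_def)
  moreover have "mixf a (mixf m W Zt) Z \<in> Q"
    using assms a_pos a_less_1 by (auto intro: mixf_in_convex_fset[of Q "mixf m W Zt" Z])
  ultimately show ?thesis
    by metis
qed

lemma AE_mixf_pos:
  assumes "AE x in M. Z x \<ge> 0" "AE x in M. Zt x > 0" "0 < l" "l < 1"
  shows "AE x in M. mixf l Z Zt x > 0"
  using assms(1,2) by eventually_elim (use assms(3,4) in \<open>simp add: mixf_def add_nonneg_pos\<close>)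

lemma condMIX_Qmax:
  assumes "Q \<subseteq> densD M" "convex_fset Q"
  shows "condMIX Q (Qmax M Q)"
  unfolding condMIX_def
proof (intro ballI allI impI)
  fix Z Zt and l :: real
  assume Z: "Z \<in> Q" and "Zt \<in> Qmax M Q" and l: "0 < l \<and> l < 1"
  then obtain E where "Zt \<in> Q" "AE x in M. Zt x > 0"
    and E: "E \<subseteq> densD M \<inter> Linf M" "Linf_dense M E (densD M \<inter> Linf M)"
    and mix_Zt: "\<forall>W\<in>E. \<exists>m. 0 < m \<and> m < 1 \<and> mixf m W Zt \<in> Q"
    unfolding Qmax_def by blast
  have "mixf l Z Zt \<in> Q"
    using assms(2) Z \<open>Zt \<in> Q\<close> l by (intro mixf_in_convex_fset) auto
  moreover have "AE x in M. mixf l Z Zt x > 0"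
    using Z assms(1) \<open>AE x in M. Zt x > 0\<close> l by (intro AE_mixf_pos) (auto simp: densD_def)
  moreover have "\<forall>W\<in>E. \<exists>n. 0 < n \<and> n < 1 \<and> mixf n W (mixf l Z Zt) \<in> Q"
    using mix_Zt assms(2) Z l by (metis mixf_into_convex_fset_through_mixf)
  ultimately show "mixf l Z Zt \<in> Qmax M Q"
    unfolding Qmax_def using E by blast
qed

lemma Qmax_subset: "Qmax M Q \<subseteq> Q"
  unfolding Qmax_def by blast

lemma condPOS_Qmax: "condPOS M (Qmax M Q)"
  unfolding Qmax_def condPOS_def by blast

lemma condINT_Qmax: "condINT M Q (Qmax M Q)"
  unfolding Qmax_def condINT_def by blast

lemma Qmax_greatest:
  assumes "QT \<subseteq> Q" "condPOS M QT" "condINT M Q QT"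
  shows "QT \<subseteq> Qmax M Q"
  using assms unfolding Qmax_def condPOS_def condINT_def by blast

theorem proposition4p9:
  fixes M :: "'a measure" and Q :: "('a \<Rightarrow> real) set"
  assumes "prob_space M"
    and "Q \<subseteq> densD M" and "convex_fset Q" and "(\<lambda>_. 1) \<in> Q"
  shows "Qmax M Q \<subseteq> Q \<and> condPOS M (Qmax M Q) \<and> condMIX Q (Qmax M Q) \<and> condINT M Q (Qmax M Q) \<and>
    (\<forall>QT. QT \<subseteq> Q \<and> condPOS M QT \<and> condMIX Q QT \<and> condINT M Q QT \<longrightarrow> QT \<subseteq> Qmax M Q)"
  using Qmax_subset condPOS_Qmax condMIX_Qmax[OF assms(2,3)] condINT_Qmax Qmax_greatest
  by blast

end
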